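(* With $G$ and $\widehat\Theta$ as in the context, the column number of $\widehat\Theta$ equals the order of $G$: $c(\widehat\Theta)=|G|$.
   Context: Column number of a substitution $\zeta$ over $\mathbb{B}$: $c(\zeta)=\min_{k\ge1,0\le j<\lambda^k}|\{\zeta^k(b)_j:b\in\mathbb{B}\}|$. Let $\theta:\mathbb{A}\to\mathbb{A}^\lambda$ ($\lambda\ge2$) be primitive (some $\theta^k(a)$ contains all letters for each $a$), injective on letters, with infinite subshift, $c=c(\theta)$. $\mathcal{X}$: sets $M\subset\mathbb{A}$ with $|M|=c$ and $M=\{\theta^k(a)_j:a\in\mathbb{A}\}$ for some $k\ge1$, $j<\lambda^k$; $\widetilde\theta(M)_j:=\{\theta(a)_j:a\in M\}\in\mathcal{X}$, with $a\mapsto\theta(a)_j$ a bijection $M\to\widetilde\theta(M)_j$. Assume (after passing to a power) $a_0\in M_0\in\mathcal{X}$, $\theta(a_0)_0=a_0$, $\widetilde\theta(M_0)_0=M_0$. Fix a total order on $M_0$ with minimum $a_0$ and $k_0\ge1$, $j_0<\lambda^{k_0}$ with $\theta^{k_0}(a)_{j_0}=a$ ($a\in M_0$), $\widetilde\theta^{k_0}(M)_{j_0}=M_0$ ($M\in\mathcal{X}$). Order each $M$ by $a<b$ iff $\theta^{k_0}(a)_{j_0}<\theta^{k_0}(b)_{j_0}$; $e_M(i)$ = $(i+1)$-th smallest element of $M$. $\widetilde\Theta(i,M)_j=(i',\widetilde\theta(M)_j)$ where $\theta(e_M(i))_j=e_{\widetilde\theta(M)_j}(i')$; $\sigma_{M,j}\in\mathcal{S}_c$: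 $\sigma_{M,j}(m)=n$ iff $\widetilde\Theta(n,M)_j=(m,\widetilde\theta(M)_j)$; $G=\langle\sigma_{M,j}:M\in\mathcal{X},j<\lambda\rangle\le\mathcal{S}_c$; $\widehat\Theta(\sigma,M)_j=(\sigma\circ\sigma_{M,j},\widetilde\theta(M)_j)$ on $G\times\mathcal{X}$. *)

theory Defs
  imports Main "HOL-Algebra.Bij" "HOL-Algebra.Generated_Groups"
begin

text \<open>A substitution of constant length lam over an alphabet is a map
  zeta :: 'b => nat => 'b, where zeta b j is the j-th letter (j < lam) of zeta(b).\<close>

text \<open>j-th letter of zeta^k(b), for j < lam^k.\<close>
fun subst_iter :: "('b \<Rightarrow> nat \<Rightarrow> 'b) \<Rightarrow> nat \<Rightarrow> nat \<Rightarrow> 'b \<Rightarrow> nat \<Rightarrow> 'b" where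
  "subst_iter \<zeta> lam 0 b j = b"
| "subst_iter \<zeta> lam (Suc k) b j = \<zeta> (subst_iter \<zeta> lam k b (j div lam)) (j mod lam)"

definition column_number :: "'b set \<Rightarrow> nat \<Rightarrow> ('b \<Rightarrow> nat \<Rightarrow> 'b) \<Rightarrow> nat" where
  "column_number B lam \<zeta> =
     Min {card ((\<lambda>b. subst_iter \<zeta> lam k b j) ` B) | k j. 1 \<le> k \<and> j < lam ^ k}"

definition primitive_subst :: "'a set \<Rightarrow> nat \<Rightarrow> ('a \<Rightarrow> nat \<Rightarrow> 'a) \<Rightarrow> bool" where
  "primitive_subst A lam \<theta> \<longleftrightarrow>
     (\<exists>k\<ge>1. \<forall>a\<in>A. \<forall>b\<in>A. \<exists>j<lam ^ k. subst_iter \<theta> lam k a j = b)"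

definition subst_language :: "'a set \<Rightarrow> nat \<Rightarrow> ('a \<Rightarrow> nat \<Rightarrow> 'a) \<Rightarrow> 'a list set" where
  "subst_language A lam \<theta> =
     {w. \<exists>a\<in>A. \<exists>k i. i + length w \<le> lam ^ k \<and>
           w = map (\<lambda>t. subst_iter \<theta> lam k a (i + t)) [0..<length w]}"

definition subshift :: "'a set \<Rightarrow> nat \<Rightarrow> ('a \<Rightarrow> nat \<Rightarrow> 'a) \<Rightarrow> (int \<Rightarrow> 'a) set" where
  "subshift A lam \<theta> =
     {x. range x \<subseteq> A \<and>
         (\<forall>i n. map (\<lambda>t. x (i + int t)) [0..<n] \<in> subst_language A lam \<theta>)}"

definition set_subst :: "('a \<Rightarrow> nat \<Rightarrow> 'a) \<Rightarrow> 'a set \<Rightarrow> nat \<Rightarrow> 'a set" where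
  "set_subst \<theta> M j = (\<lambda>a. \<theta> a j) ` M"

definition Xcal :: "'a set \<Rightarrow> nat \<Rightarrow> ('a \<Rightarrow> nat \<Rightarrow> 'a) \<Rightarrow> 'a set set" where
  "Xcal A lam \<theta> =
     {M. M \<subseteq> A \<and> card M = column_number A lam \<theta> \<and>
         (\<exists>k j. 1 \<le> k \<and> j < lam ^ k \<and> M = (\<lambda>a. subst_iter \<theta> lam k a j) ` A)}"

definition ordM :: "nat \<Rightarrow> ('a \<Rightarrow> nat \<Rightarrow> 'a) \<Rightarrow> ('a \<Rightarrow> 'a \<Rightarrow> bool) \<Rightarrow> nat \<Rightarrow> nat \<Rightarrow> 'a \<Rightarrow> 'a \<Rightarrow> bool" where
  "ordM lam \<theta> less0 k0 j0 a b \<longleftrightarrow>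
     less0 (subst_iter \<theta> lam k0 a j0) (subst_iter \<theta> lam k0 b j0)"

definition eM :: "nat \<Rightarrow> ('a \<Rightarrow> nat \<Rightarrow> 'a) \<Rightarrow> ('a \<Rightarrow> 'a \<Rightarrow> bool) \<Rightarrow> nat \<Rightarrow> nat \<Rightarrow> 'a set \<Rightarrow> nat \<Rightarrow> 'a" where
  "eM lam \<theta> less0 k0 j0 M i =
     (THE a. a \<in> M \<and> card {b \<in> M. ordM lam \<theta> less0 k0 j0 b a} = i)"

definition sigmaMj :: "'a set \<Rightarrow> nat \<Rightarrow> ('a \<Rightarrow> nat \<Rightarrow> 'a) \<Rightarrow> ('a \<Rightarrow> 'a \<Rightarrow> bool) \<Rightarrow> nat \<Rightarrow> nat
    \<Rightarrow> 'a set \<Rightarrow> nat \<Rightarrow> (nat \<Rightarrow> nat)" where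
  "sigmaMj A lam \<theta> less0 k0 j0 M j =
     restrict
       (\<lambda>m. THE n. n < column_number A lam \<theta> \<and>
              \<theta> (eM lam \<theta> less0 k0 j0 M n) j = eM lam \<theta> less0 k0 j0 (set_subst \<theta> M j) m)
       {..<column_number A lam \<theta>}"

definition Ggroup :: "'a set \<Rightarrow> nat \<Rightarrow> ('a \<Rightarrow> nat \<Rightarrow> 'a) \<Rightarrow> ('a \<Rightarrow> 'a \<Rightarrow> bool) \<Rightarrow> nat \<Rightarrow> nat
    \<Rightarrow> (nat \<Rightarrow> nat) set" where
  "Ggroup A lam \<theta> less0 k0 j0 =
     generate (BijGroup {..<column_number A lam \<theta>})
       {sigmaMj A lam \<theta> less0 k0 j0 M j | M j. M \<in> Xcal A lam \<theta> \<and> j < lam}"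

definition Theta_hat :: "'a set \<Rightarrow> nat \<Rightarrow> ('a \<Rightarrow> nat \<Rightarrow> 'a) \<Rightarrow> ('a \<Rightarrow> 'a \<Rightarrow> bool) \<Rightarrow> nat \<Rightarrow> nat
    \<Rightarrow> (nat \<Rightarrow> nat) \<times> 'a set \<Rightarrow> nat \<Rightarrow> (nat \<Rightarrow> nat) \<times> 'a set" where
  "Theta_hat A lam \<theta> less0 k0 j0 p j =
     (fst p \<otimes>\<^bsub>BijGroup {..<column_number A lam \<theta>}\<^esub> sigmaMj A lam \<theta> less0 k0 j0 (snd p) j,
      set_subst \<theta> (snd p) j)"

end

theory Submission
  imports Defs
begin

text \<open>The map \<open>\<Theta>\<close> is a skew product over the set substitution: its \<open>k\<close>-th iterate sends
  \<open>(\<sigma>, M)\<close> in column \<open>j\<close> to \<open>(\<sigma> T, \<theta>\<^sup>k(M)\<^sub>j)\<close> with \<open>T \<in> G\<close> depending only on \<open>M, k, j\<close>.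
  Right multiplication by \<open>T\<close> is injective, so every column of every power of \<open>\<Theta>\<close> meets
  the fibre \<open>G \<times> {M\<^sub>0}\<close> in \<open>|G|\<close> points, whereas column \<open>j\<^sub>0\<close> of \<open>\<Theta>\<^sup>k\<^sup>0\<close> collapses every
  \<open>M\<close> to \<open>M\<^sub>0\<close> and thus has exactly \<open>|G|\<close> points. On the side of \<open>\<theta>\<close> one only has to know
  that each \<open>\<sigma>\<^sub>M\<^sub>,\<^sub>j\<close> is a permutation of \<open>{0..<c}\<close>: by minimality of \<open>c\<close> the letter map
  \<open>a \<mapsto> \<theta>(a)\<^sub>j\<close> is a bijection of \<open>M\<close> onto \<open>\<theta>(M)\<^sub>j \<in> \<X>\<close>, and \<open>e\<^sub>M\<close> enumerates \<open>M\<close>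
  because \<open>\<theta>\<^sup>k\<^sup>0(\<cdot>)\<^sub>j\<^sub>0\<close> transports the total order of \<open>M\<^sub>0\<close> to \<open>M\<close>.\<close>

lemma bij_betw_rank:
  assumes fin: "finite M" and irrefl: "\<forall>a\<in>M. \<not> r a a"
    and trans: "\<forall>a\<in>M. \<forall>b\<in>M. \<forall>d\<in>M. r a b \<longrightarrow> r b d \<longrightarrow> r a d"
    and total: "\<forall>a\<in>M. \<forall>b\<in>M. a \<noteq> b \<longrightarrow> r a b \<or> r b a"
  shows "bij_betw (\<lambda>a. card {b\<in>M. r b a}) M {..<card M}"
proof -
  let ?rank = "\<lambda>a. card {b\<in>M. r b a}"
  have rank_less: "?rank a < ?rank b" if "a \<in> M" "b \<in> M" "r a b" for a b
  proof -
    have "{x\<in>M. r x a} \<subseteq> {x\<in>M. r x b}"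
      using that trans by blast
    moreover have "a \<in> {x\<in>M. r x b}" "a \<notin> {x\<in>M. r x a}"
      using that irrefl by auto
    ultimately show ?thesis
      using fin by (intro psubset_card_mono) auto
  qed
  have inj: "inj_on ?rank M"
  proof (rule inj_onI)
    fix a b assume "a \<in> M" "b \<in> M" "?rank a = ?rank b"
    moreover have "a = b \<or> r a b \<or> r b a"
      using total \<open>a \<in> M\<close> \<open>b \<in> M\<close> by blast
    ultimately show "a = b"
      using rank_less[of a b] rank_less[of b a] by auto
  qed
  have "?rank a < card M" if "a \<in> M" for a
    using that irrefl fin by (intro psubset_card_mono) auto
  then have "?rank ` M \<subseteq> {..<card M}"
    by auto
  moreover have "card (?rank ` M) = card {..<card M}"
    using inj by (simp add: card_image)
  ultimately have "?rank ` M = {..<card M}"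
    by (simp add: card_subset_eq)
  with inj show ?thesis
    by (simp add: bij_betw_def)
qed

lemma The_eq_inv_into:
  assumes "bij_betw f I N" and "y \<in> N"
  shows "(THE x. x \<in> I \<and> f x = y) = inv_into I f y"
proof (rule the_equality)
  have "y \<in> f ` I"
    using assms by (simp add: bij_betw_def)
  then show "inv_into I f y \<in> I \<and> f (inv_into I f y) = y"
    by (simp add: inv_into_into f_inv_into_f)
next
  fix x assume "x \<in> I \<and> f x = y"
  then show "x = inv_into I f y"
    using assms(1) by (auto simp: bij_betw_def inv_into_f_f)
qed

lemma restrict_The_in_Bij:
  assumes f: "bij_betw f I N" and g: "bij_betw g I N"
  shows "restrict (\<lambda>m. THE n. n \<in> I \<and> f n = g m) I \<in> Bij I"
proof -
  have "restrict (\<lambda>m. THE n. n \<in> I \<and> f n = g m) I = restrict (inv_into I f \<circ> g) I"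
  proof (rule restrict_ext)
    fix m assume "m \<in> I"
    then show "(THE n. n \<in> I \<and> f n = g m) = (inv_into I f \<circ> g) m"
      using The_eq_inv_into[OF f bij_betw_apply[OF g]] by simp
  qed
  moreover have "bij_betw (inv_into I f \<circ> g) I I"
    using g bij_betw_inv_into[OF f] by (rule bij_betw_trans)
  then have "bij_betw (restrict (inv_into I f \<circ> g) I) I I"
    by (rule bij_betw_cong[THEN iffD1, rotated]) simp
  ultimately show ?thesis
    by (simp add: Bij_def)
qed

lemma finite_carrier_BijGroup:
  assumes "finite S"
  shows "finite (carrier (BijGroup S))"
proof (rule finite_subset)
  show "carrier (BijGroup S) \<subseteq> S \<rightarrow>\<^sub>E S"
    by (auto simp: BijGroup_def PiE_def dest: Bij_imp_funcset Bij_imp_extensional)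
  show "finite (S \<rightarrow>\<^sub>E S)"
    using assms by (simp add: finite_PiE)
qed

lemma finite_column_cards:
  assumes "finite B"
  shows "finite {card ((\<lambda>b. subst_iter \<zeta> lam k b j) ` B) | k j. 1 \<le> k \<and> j < lam ^ k}"
  by (rule finite_subset[of _ "{..card B}"]) (auto intro: card_image_le[OF assms])

lemma column_number_le:
  assumes "finite B" and "1 \<le> k" and "j < lam ^ k"
  shows "column_number B lam \<zeta> \<le> card ((\<lambda>b. subst_iter \<zeta> lam k b j) ` B)"
  unfolding column_number_def using finite_column_cards[OF assms(1)] assms(2,3)
  by (auto intro!: Min_le)

lemma column_number_eqI:
  assumes "finite B"
    and lower: "\<And>k' j'. 1 \<le> k' \<Longrightarrow> j' < lam ^ k' \<Longrightarrow>
                  n \<le> card ((\<lambda>b. subst_iter \<zeta> lam k' b j') ` B)"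
    and "1 \<le> k" and "j < lam ^ k"
    and attained: "card ((\<lambda>b. subst_iter \<zeta> lam k b j) ` B) = n"
  shows "column_number B lam \<zeta> = n"
  unfolding column_number_def
proof (rule Min_eqI)
  show "finite {card ((\<lambda>b. subst_iter \<zeta> lam k b j) ` B) | k j. 1 \<le> k \<and> j < lam ^ k}"
    using assms(1) by (rule finite_column_cards)
  show "n \<le> y" if "y \<in> {card ((\<lambda>b. subst_iter \<zeta> lam k b j) ` B) | k j. 1 \<le> k \<and> j < lam ^ k}" for y
    using that lower by blast
  show "n \<in> {card ((\<lambda>b. subst_iter \<zeta> lam k b j) ` B) | k j. 1 \<le> k \<and> j < lam ^ k}"
    using assms(3,4) attained by blast
qed

lemma subst_iter_closed:
  assumes "0 < lam" and "\<forall>M\<in>X. \<forall>j<lam. \<tau> M j \<in> X" and "M \<in> X"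
  shows "subst_iter \<tau> lam k M j \<in> X"
  using assms by (induction k arbitrary: j) auto

lemma subst_iter_set_subst:
  "subst_iter (set_subst \<theta>) lam k M j = (\<lambda>a. subst_iter \<theta> lam k a j) ` M"
  by (induction k arbitrary: j) (auto simp: set_subst_def image_image)

definition skew_product ::
    "('g, 'm) monoid_scheme \<Rightarrow> ('x \<Rightarrow> nat \<Rightarrow> 'g) \<Rightarrow> ('x \<Rightarrow> nat \<Rightarrow> 'x) \<Rightarrow> 'g \<times> 'x \<Rightarrow> nat \<Rightarrow> 'g \<times> 'x"
  where "skew_product G s \<tau> p j = (fst p \<otimes>\<^bsub>G\<^esub> s (snd p) j, \<tau> (snd p) j)"

locale skew_product_system = group G
  for G (structure) +
  fixes H :: "'g set" and X :: "'x set"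
    and s :: "'x \<Rightarrow> nat \<Rightarrow> 'g" and \<tau> :: "'x \<Rightarrow> nat \<Rightarrow> 'x" and lam :: nat
  assumes subgroup: "subgroup H G" and lam: "0 < lam"
    and closed: "\<forall>M\<in>X. \<forall>j<lam. \<tau> M j \<in> X \<and> s M j \<in> H"
begin

lemma subst_iter_skew_product:
  assumes "M \<in> X"
  shows "\<exists>T\<in>H. \<forall>\<sigma>\<in>carrier G.
           subst_iter (skew_product G s \<tau>) lam k (\<sigma>, M) j = (\<sigma> \<otimes> T, subst_iter \<tau> lam k M j)"
proof (induction k arbitrary: j)
  case 0
  show ?case
    by (intro bexI[of _ \<one>]) (auto simp: subgroup.one_closed[OF subgroup])
next
  case (Suc k)
  then obtain T where T: "T \<in> H" and IH: "\<forall>\<sigma>\<in>carrier G.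
      subst_iter (skew_product G s \<tau>) lam k (\<sigma>, M) (j div lam) =
      (\<sigma> \<otimes> T, subst_iter \<tau> lam k M (j div lam))"
    by blast
  define N where "N = subst_iter \<tau> lam k M (j div lam)"
  have "N \<in> X"
    unfolding N_def using subst_iter_closed[OF lam _ assms] closed by blast
  then have sN: "s N (j mod lam) \<in> H"
    using closed lam by simp
  have carrier: "T \<in> carrier G" "s N (j mod lam) \<in> carrier G"
    using T sN subgroup.subset[OF subgroup] by auto
  have "subst_iter (skew_product G s \<tau>) lam (Suc k) (\<sigma>, M) j =
        (\<sigma> \<otimes> (T \<otimes> s N (j mod lam)), subst_iter \<tau> lam (Suc k) M j)"
    if "\<sigma> \<in> carrier G" for \<sigma>
    using that IH carrier by (simp add: skew_product_def N_def m_assoc)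
  then show ?case
    using subgroup.m_closed[OF subgroup T sN] by blast
qed

lemma column_number_skew_product:
  assumes "finite H" and "finite X" and "M0 \<in> X"
    and "1 \<le> k0" and "j0 < lam ^ k0"
    and collapse: "\<forall>M\<in>X. subst_iter \<tau> lam k0 M j0 = M0"
  shows "column_number (H \<times> X) lam (skew_product G s \<tau>) = card H"
proof (rule column_number_eqI[where k = k0 and j = j0])
  let ?column = "\<lambda>k j. (\<lambda>p. subst_iter (skew_product G s \<tau>) lam k p j) ` (H \<times> X)"
  have H_carrier: "H \<subseteq> carrier G"
    using subgroup by (rule subgroup.subset)
  show "finite (H \<times> X)"
    using assms by simp
  show lower: "card H \<le> card (?column k j)" for k j
  proof -
    obtain T where T: "T \<in> H" and iter: "\<forall>\<sigma>\<in>carrier G.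
        subst_iter (skew_product G s \<tau>) lam k (\<sigma>, M0) j = (\<sigma> \<otimes> T, subst_iter \<tau> lam k M0 j)"
      using subst_iter_skew_product[OF \<open>M0 \<in> X\<close>] by blast
    let ?f = "\<lambda>\<sigma>. subst_iter (skew_product G s \<tau>) lam k (\<sigma>, M0) j"
    have "inj_on ?f H"
    proof (rule inj_onI)
      fix x y assume "x \<in> H" "y \<in> H" "?f x = ?f y"
      then have "x \<in> carrier G" "y \<in> carrier G"
        using H_carrier by auto
      moreover have "x \<otimes> T = y \<otimes> T"
        using \<open>?f x = ?f y\<close> iter[rule_format, OF \<open>x \<in> carrier G\<close>]
          iter[rule_format, OF \<open>y \<in> carrier G\<close>] by simp
      ultimately show "x = y"
        using T H_carrier right_cancel[of T x y] by auto
    qed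
    then have "card H = card (?f ` H)"
      by (simp add: card_image)
    also have "\<dots> \<le> card (?column k j)"
      using \<open>M0 \<in> X\<close> \<open>finite (H \<times> X)\<close> by (intro card_mono) auto
    finally show ?thesis .
  qed
  have "?column k0 j0 \<subseteq> H \<times> {M0}"
  proof
    fix p assume "p \<in> ?column k0 j0"
    then obtain \<sigma> M where "\<sigma> \<in> H" "M \<in> X"
      and "p = subst_iter (skew_product G s \<tau>) lam k0 (\<sigma>, M) j0" by blast
    moreover obtain T where "T \<in> H" and iter: "\<forall>\<sigma>\<in>carrier G.
        subst_iter (skew_product G s \<tau>) lam k0 (\<sigma>, M) j0 = (\<sigma> \<otimes> T, subst_iter \<tau> lam k0 M j0)"
      using subst_iter_skew_product[OF \<open>M \<in> X\<close>] by blast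
    moreover have "\<sigma> \<in> carrier G"
      using \<open>\<sigma> \<in> H\<close> H_carrier by auto
    ultimately have "p = (\<sigma> \<otimes> T, M0)"
      using collapse by simp
    then show "p \<in> H \<times> {M0}"
      using subgroup.m_closed[OF subgroup \<open>\<sigma> \<in> H\<close> \<open>T \<in> H\<close>] by simp
  qed
  then have "card (?column k0 j0) \<le> card (H \<times> {M0})"
    using \<open>finite H\<close> by (intro card_mono) auto
  with lower[of k0 j0] show "card (?column k0 j0) = card H"
    by (simp add: card_cartesian_product)
qed (fact assms)+

end

locale column_substitution =
  fixes A :: "'a set" and lam :: nat and \<theta> :: "'a \<Rightarrow> nat \<Rightarrow> 'a"
  assumes finite_alphabet: "finite A" and lam_pos: "0 < lam"
    and letters_closed: "\<forall>a\<in>A. \<forall>j<lam. \<theta> a j \<in> A"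
begin

abbreviation "c \<equiv> column_number A lam \<theta>"
abbreviation "X \<equiv> Xcal A lam \<theta>"

lemma Xcal_memD:
  assumes "M \<in> X"
  shows "M \<subseteq> A" and "finite M" and "card M = c"
  using assms finite_subset[OF _ finite_alphabet] by (auto simp: Xcal_def)

lemma finite_Xcal: "finite X"
  by (rule finite_subset[of _ "Pow A"]) (auto simp: Xcal_def finite_alphabet)

lemma set_subst_in_Xcal:
  assumes "M \<in> X" and "j < lam"
  shows "set_subst \<theta> M j \<in> X"
proof -
  obtain k i where i: "i < lam ^ k"
    and M: "M = (\<lambda>a. subst_iter \<theta> lam k a i) ` A"
    using assms(1) by (auto simp: Xcal_def)
  have "i * lam + j < (i + 1) * lam"
    using assms(2) by simp
  also have "\<dots> \<le> lam ^ Suc k"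
    using i by (metis Suc_eq_plus1 Suc_leI mult_le_mono1 power_Suc2)
  finally have column: "i * lam + j < lam ^ Suc k" .
  \<comment> \<open>\<open>\<theta>(M)\<^sub>j\<close> is itself a column of \<open>\<theta>\<^sup>k\<^sup>+\<^sup>1\<close>, hence has at least \<open>c\<close> letters.\<close>
  have eq: "set_subst \<theta> M j = (\<lambda>a. subst_iter \<theta> lam (Suc k) a (i * lam + j)) ` A"
    using M assms(2) by (simp add: set_subst_def image_image)
  have "c \<le> card (set_subst \<theta> M j)"
    unfolding eq by (rule column_number_le[OF finite_alphabet _ column]) simp
  moreover have "card (set_subst \<theta> M j) \<le> card M"
    unfolding set_subst_def using Xcal_memD(2)[OF assms(1)] by (rule card_image_le)
  moreover have "set_subst \<theta> M j \<subseteq> A"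
    using Xcal_memD(1)[OF assms(1)] letters_closed assms(2) by (auto simp: set_subst_def)
  ultimately show ?thesis
    unfolding Xcal_def using eq column Xcal_memD(3)[OF assms(1)]
    by (intro CollectI conjI exI[of _ "Suc k"] exI[of _ "i * lam + j"]) auto
qed

lemma bij_betw_letter:
  assumes "M \<in> X" and "j < lam"
  shows "bij_betw (\<lambda>a. \<theta> a j) M (set_subst \<theta> M j)"
  unfolding bij_betw_def set_subst_def
  using Xcal_memD[OF assms(1)] Xcal_memD[OF set_subst_in_Xcal[OF assms]]
  by (simp add: eq_card_imp_inj_on set_subst_def)

end

locale ordered_column_substitution = column_substitution +
  fixes less0 :: "'a \<Rightarrow> 'a \<Rightarrow> bool" and k0 j0 :: nat and M0 :: "'a set"
  assumes M0_in_Xcal: "M0 \<in> X"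
    and irrefl: "\<forall>a\<in>M0. \<not> less0 a a"
    and trans: "\<forall>a\<in>M0. \<forall>b\<in>M0. \<forall>d\<in>M0. less0 a b \<longrightarrow> less0 b d \<longrightarrow> less0 a d"
    and total: "\<forall>a\<in>M0. \<forall>b\<in>M0. a \<noteq> b \<longrightarrow> less0 a b \<or> less0 b a"
    and collapse: "\<forall>M\<in>X. subst_iter (set_subst \<theta>) lam k0 M j0 = M0"
begin

abbreviation "rank M a \<equiv> card {b\<in>M. ordM lam \<theta> less0 k0 j0 b a}"

lemma bij_betw_collapse:
  assumes "M \<in> X"
  shows "bij_betw (\<lambda>a. subst_iter \<theta> lam k0 a j0) M M0"
proof -
  have "(\<lambda>a. subst_iter \<theta> lam k0 a j0) ` M = M0"
    using collapse assms by (simp add: subst_iter_set_subst)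
  then show ?thesis
    using Xcal_memD[OF assms] Xcal_memD[OF M0_in_Xcal]
    by (simp add: bij_betw_def eq_card_imp_inj_on)
qed

lemma bij_betw_rank_Xcal:
  assumes "M \<in> X"
  shows "bij_betw (rank M) M {..<c}"
proof -
  let ?\<phi> = "\<lambda>a. subst_iter \<theta> lam k0 a j0"
  have into: "?\<phi> a \<in> M0" and inj: "?\<phi> a = ?\<phi> b \<Longrightarrow> a = b" if "a \<in> M" "b \<in> M" for a b
    using bij_betw_collapse[OF assms] that by (auto simp: bij_betw_def dest: inj_onD)
  have "bij_betw (rank M) M {..<card M}"
  proof (rule bij_betw_rank)
    show "finite M"
      using Xcal_memD[OF assms] by simp
    show "\<forall>a\<in>M. \<not> ordM lam \<theta> less0 k0 j0 a a"
      using into irrefl by (auto simp: ordM_def)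
    show "\<forall>a\<in>M. \<forall>b\<in>M. \<forall>d\<in>M. ordM lam \<theta> less0 k0 j0 a b \<longrightarrow> ordM lam \<theta> less0 k0 j0 b d
        \<longrightarrow> ordM lam \<theta> less0 k0 j0 a d"
      using into trans unfolding ordM_def by blast
    show "\<forall>a\<in>M. \<forall>b\<in>M. a \<noteq> b \<longrightarrow> ordM lam \<theta> less0 k0 j0 a b \<or> ordM lam \<theta> less0 k0 j0 b a"
      using into inj total unfolding ordM_def by metis
  qed
  then show ?thesis
    using Xcal_memD[OF assms] by simp
qed

lemma bij_betw_eM:
  assumes "M \<in> X"
  shows "bij_betw (eM lam \<theta> less0 k0 j0 M) {..<c} M"
proof -
  have "eM lam \<theta> less0 k0 j0 M i = inv_into M (rank M) i" if "i \<in> {..<c}" for i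
    unfolding eM_def using bij_betw_rank_Xcal[OF assms] that by (rule The_eq_inv_into)
  then show ?thesis
    using bij_betw_inv_into[OF bij_betw_rank_Xcal[OF assms]] by (rule bij_betw_cong[THEN iffD2])
qed

lemma sigmaMj_in_Bij:
  assumes "M \<in> X" and "j < lam"
  shows "sigmaMj A lam \<theta> less0 k0 j0 M j \<in> Bij {..<c}"
proof -
  let ?N = "set_subst \<theta> M j"
  have "bij_betw (\<lambda>n. \<theta> (eM lam \<theta> less0 k0 j0 M n) j) {..<c} ?N"
    using bij_betw_trans[OF bij_betw_eM[OF assms(1)] bij_betw_letter[OF assms]]
    by (simp add: comp_def)
  moreover have "bij_betw (eM lam \<theta> less0 k0 j0 ?N) {..<c} ?N"
    using bij_betw_eM[OF set_subst_in_Xcal[OF assms]] .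
  ultimately show ?thesis
    unfolding sigmaMj_def lessThan_iff[symmetric] by (rule restrict_The_in_Bij)
qed

lemma subgroup_Ggroup: "subgroup (Ggroup A lam \<theta> less0 k0 j0) (BijGroup {..<c})"
proof -
  have "{sigmaMj A lam \<theta> less0 k0 j0 M j | M j. M \<in> X \<and> j < lam} \<subseteq> carrier (BijGroup {..<c})"
    using sigmaMj_in_Bij by (auto simp: BijGroup_def)
  then show ?thesis
    unfolding Ggroup_def by (rule group.generate_is_subgroup[OF group_BijGroup])
qed

lemma sigmaMj_in_Ggroup:
  assumes "M \<in> X" and "j < lam"
  shows "sigmaMj A lam \<theta> less0 k0 j0 M j \<in> Ggroup A lam \<theta> less0 k0 j0"
  unfolding Ggroup_def using assms by (intro generate.incl) blast

lemma finite_Ggroup: "finite (Ggroup A lam \<theta> less0 k0 j0)"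
  by (rule finite_subset[OF subgroup.subset[OF subgroup_Ggroup] finite_carrier_BijGroup]) simp

lemma Theta_hat_eq_skew_product:
  "Theta_hat A lam \<theta> less0 k0 j0 =
     skew_product (BijGroup {..<c}) (sigmaMj A lam \<theta> less0 k0 j0) (set_subst \<theta>)"
  by (intro ext) (simp add: Theta_hat_def skew_product_def)

sublocale Theta: skew_product_system "BijGroup {..<c}" "Ggroup A lam \<theta> less0 k0 j0" X
    "sigmaMj A lam \<theta> less0 k0 j0" "set_subst \<theta>" lam
  using set_subst_in_Xcal sigmaMj_in_Ggroup
  by (intro skew_product_system.intro skew_product_system_axioms.intro group_BijGroup
      subgroup_Ggroup lam_pos) blast

lemma column_number_Theta_hat:
  assumes "1 \<le> k0" and "j0 < lam ^ k0"
  shows "column_number (Ggroup A lam \<theta> less0 k0 j0 \<times> X) lam (Theta_hat A lam \<theta> less0 k0 j0)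
           = card (Ggroup A lam \<theta> less0 k0 j0)"
  unfolding Theta_hat_eq_skew_product
  using finite_Ggroup finite_Xcal M0_in_Xcal assms collapse
  by (rule Theta.column_number_skew_product)

end

text \<open>Only the order on \<open>M\<^sub>0\<close> and the collapse of \<open>\<X>\<close> onto \<open>M\<^sub>0\<close> in column \<open>j\<^sub>0\<close> of
  \<open>\<theta>\<^sup>k\<^sup>0\<close> enter the count.\<close>

theorem mainTheorem18:
  fixes A :: "'a set" and lam :: nat and \<theta> :: "'a \<Rightarrow> nat \<Rightarrow> 'a"
    and a0 :: 'a and M0 :: "'a set" and less0 :: "'a \<Rightarrow> 'a \<Rightarrow> bool"
    and k0 j0 :: nat
  assumes finA: "finite A" and neA: "A \<noteq> {}"
    and lam: "lam \<ge> 2"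
    and closed: "\<forall>a\<in>A. \<forall>j<lam. \<theta> a j \<in> A"
    and prim: "primitive_subst A lam \<theta>"
    and inj: "inj_on (\<lambda>a. map (\<theta> a) [0..<lam]) A"
    and infin: "infinite (subshift A lam \<theta>)"
    and a0M0: "a0 \<in> M0" and M0X: "M0 \<in> Xcal A lam \<theta>"
    and fixa0: "\<theta> a0 0 = a0" and fixM0: "set_subst \<theta> M0 0 = M0"
    and irrefl: "\<forall>a\<in>M0. \<not> less0 a a"
    and trans: "\<forall>a\<in>M0. \<forall>b\<in>M0. \<forall>d\<in>M0. less0 a b \<longrightarrow> less0 b d \<longrightarrow> less0 a d"
    and total: "\<forall>a\<in>M0. \<forall>b\<in>M0. a \<noteq> b \<longrightarrow> less0 a b \<or> less0 b a"
    and minim: "\<forall>b\<in>M0. b \<noteq> a0 \<longrightarrow> less0 a0 b"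
    and k0: "k0 \<ge> 1" and j0: "j0 < lam ^ k0"
    and fixk0: "\<forall>a\<in>M0. subst_iter \<theta> lam k0 a j0 = a"
    and retk0: "\<forall>M\<in>Xcal A lam \<theta>. subst_iter (set_subst \<theta>) lam k0 M j0 = M0"
  shows "column_number (Ggroup A lam \<theta> less0 k0 j0 \<times> Xcal A lam \<theta>) lam
            (Theta_hat A lam \<theta> less0 k0 j0)
         = card (Ggroup A lam \<theta> less0 k0 j0)"
proof -
  interpret ordered_column_substitution A lam \<theta> less0 k0 j0 M0
  proof unfold_locales
    show "0 < lam"
      using lam by simp
  qed (fact finA closed M0X irrefl trans total retk0)+
  show ?thesis
    using k0 j0 by (rule column_number_Theta_hat)
qed

end
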